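(* Let $\mathsf{F}(X)=X\times X$ (with $\mathsf{F}h=h\times h$) and $\mathsf{B}=\mathcal{P}_{fin}$ the finite covariant powerset functor ($\mathsf{B}h(S)=h[S]$). Then the category $\mathit{Dialg}(\mathsf{F},\mathsf{B})$ has no final object.
   Context: For functors $\mathsf{F},\mathsf{B}:\mathbf{Set}\to\mathbf{Set}$, an $(\mathsf{F},\mathsf{B})$-dialgebra is a pair $(X,f)$ with $X$ a set (the carrier) and $f:\mathsf{F}X\to\mathsf{B}X$ a function. A homomorphism $h:(X,f)\to(Y,g)$ is a function $h:X\to Y$ with $g\circ\mathsf{F}h=\mathsf{B}h\circ f$. Dialgebras and homomorphisms form the category $\mathit{Dialg}(\mathsf{F},\mathsf{B})$. *)

theory Defs
  imports "HOL-Library.FuncSet"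
begin

definition dialg :: "'a set \<Rightarrow> ('a \<times> 'a \<Rightarrow> 'a set) \<Rightarrow> bool" where
  "dialg X f \<longleftrightarrow> (\<forall>x\<in>X. \<forall>y\<in>X. finite (f (x, y)) \<and> f (x, y) \<subseteq> X)"

text \<open>Homomorphisms (X,f) \<rightarrow> (Y,g): functions X \<rightarrow> Y (extensional, so that
  equality of homomorphisms is equality as functions on X) with
  g \<circ> (h \<times> h) = h[-] \<circ> f.\<close>
definition dialg_hom :: "'a set \<Rightarrow> ('a \<times> 'a \<Rightarrow> 'a set) \<Rightarrow> 'b set \<Rightarrow> ('b \<times> 'b \<Rightarrow> 'b set)
    \<Rightarrow> ('a \<Rightarrow> 'b) \<Rightarrow> bool" where
  "dialg_hom X f Y g h \<longleftrightarrow> h \<in> X \<rightarrow>\<^sub>E Y \<and> (\<forall>x\<in>X. \<forall>y\<in>X. g (h x, h y) = h ` f (x, y))"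

end

theory Submission
  imports Defs
begin

text \<open>
  Call a point x of a dialgebra (X, f) \<^emph>\<open>loop-free\<close> if f (x, x) = {}.
  (1) The one-point dialgebra ({p}, \<lambda>_. {}) maps to (X, f) by sending p to any
      loop-free point, and every such point gives a different homomorphism.  So if
      (X, f) admits a unique homomorphism from it, X has at most one loop-free point.
  (2) On any carrier Y, the \<^emph>\<open>tagging\<close> structure (u, v) \<mapsto> (if u = v then {} else {u})
      is a dialgebra.  A homomorphism h from it sends distinct points p, q to
      loop-free points h p, h q with f (h p, h q) = {h p}; since loop-freeness of
      h p rules out f (h p, h p) = {h p}, these images are distinct.
  A final dialgebra would receive homomorphisms from both the one-point dialgebra
  and the tagging dialgebra on the two-element carrier {{}, UNIV}; by (2) it has
  two loop-free points, contradicting (1).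
\<close>

definition loop_free :: "('a \<times> 'a \<Rightarrow> 'b set) \<Rightarrow> 'a \<Rightarrow> bool" where
  "loop_free f x \<longleftrightarrow> f (x, x) = {}"

lemma dialg_point: "dialg {p} (\<lambda>_. {})"
  unfolding dialg_def by simp

lemma dialg_hom_from_point:
  assumes "x \<in> X" and "loop_free f x"
  shows "dialg_hom {p} (\<lambda>_. {}) X f (\<lambda>y. if y = p then x else undefined)"
  using assms unfolding dialg_hom_def loop_free_def by (simp add: PiE_iff extensional_def)

text \<open>Uniqueness of homomorphisms out of the one-point dialgebra forces at most one
  loop-free point, since distinct points give distinct constant maps.\<close>
lemma loop_free_unique:
  assumes uniq: "\<exists>!h. dialg_hom {p} (\<lambda>_. {}) X f h"
    and a: "a \<in> X" "loop_free f a" and b: "b \<in> X" "loop_free f b"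
  shows "a = b"
proof -
  have "(\<lambda>y. if y = p then a else undefined) = (\<lambda>y. if y = p then b else undefined)"
    using the1_equality[where P = "dialg_hom {p} (\<lambda>_. {}) X f", OF uniq]
      dialg_hom_from_point[OF a, where p = p] dialg_hom_from_point[OF b, where p = p]
    by metis
  from fun_cong[OF this, of p] show ?thesis by simp
qed

definition tag :: "'a \<times> 'a \<Rightarrow> 'a set" where
  "tag = (\<lambda>(u, v). if u = v then {} else {u})"

lemma dialg_tag: "dialg Y tag"
  unfolding dialg_def tag_def by simp

lemma dialg_hom_from_tag:
  assumes h: "dialg_hom Y tag X f h" and pq: "p \<in> Y" "q \<in> Y" "p \<noteq> q"
  shows "h p \<in> X" "h q \<in> X" "loop_free f (h p)" "loop_free f (h q)" "h p \<noteq> h q"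
proof -
  have hom: "\<And>u v. u \<in> Y \<Longrightarrow> v \<in> Y \<Longrightarrow> f (h u, h v) = h ` tag (u, v)"
    using h unfolding dialg_hom_def by blast
  show "h p \<in> X" "h q \<in> X"
    using h pq unfolding dialg_hom_def by (auto dest: PiE_mem)
  show lp: "loop_free f (h p)" and "loop_free f (h q)"
    using hom[OF pq(1) pq(1)] hom[OF pq(2) pq(2)] unfolding loop_free_def tag_def by simp_all
  have "f (h p, h q) = {h p}"
    using hom[OF pq(1) pq(2)] pq(3) unfolding tag_def by simp
  then show "h p \<noteq> h q"
    using lp unfolding loop_free_def by force
qed

theorem mainTheorem2:
  shows "\<not> (\<exists>(X :: 'a set) f. dialg X f \<and>
            (\<forall>(Y :: 'a set set) g. dialg Y g \<longrightarrow> (\<exists>!h. dialg_hom Y g X f h)))"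
proof
  assume "\<exists>(X :: 'a set) f. dialg X f \<and>
            (\<forall>(Y :: 'a set set) g. dialg Y g \<longrightarrow> (\<exists>!h. dialg_hom Y g X f h))"
  then obtain X :: "'a set" and f where final:
    "\<And>(Y :: 'a set set) g. dialg Y g \<Longrightarrow> \<exists>!h. dialg_hom Y g X f h" by blast
  define two :: "'a set set" where "two = {{}, UNIV}"
  obtain h where h: "dialg_hom two tag X f h"
    using ex1_implies_ex[OF final[OF dialg_tag[of two]]] by blast
  have distinct: "({} :: 'a set) \<noteq> UNIV" and in_two: "{} \<in> two" "UNIV \<in> two"
    unfolding two_def by simp_all
  note images = dialg_hom_from_tag[OF h in_two distinct]
  have "h {} = h UNIV"
    by (rule loop_free_unique[OF final[OF dialg_point[of "{}"]] images(1,3) images(2,4)])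
  with images(5) show False ..
qed

end
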